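(* Let $\mathcal Y\subset\mathbb R^d$ be a finite set such that no element of $\mathcal Y$ is a strict convex combination of other elements of $\mathcal Y$, let $\kappa>0$, let $\xi_1,\dots,\xi_N$ be noise samples and $c:\mathcal Y\times\Xi\to\mathbb R$ a cost, and set $\gamma_i=(c(y,\xi_i))_{y\in\mathcal Y}\in\mathbb R^{\mathcal Y}$. Let $\Omega_\Delta$ be a proper lower-semicontinuous convex function on $\mathbb R^{\mathcal Y}$ with domain $\Delta^{\mathcal Y}$ whose restriction to the affine hull $H_\Delta$ of $\Delta^{\mathcal Y}$ is Legendre-type, and suppose $\Omega_\Delta=\Psi_\Delta+\mathbb I_{\Delta^{\mathcal Y}}$ with $\Psi_\Delta$ a Legendre-type function. Assume that the Jensen gap of $\Psi_\Delta$, $$q_\otimes=(q_1,\dots,q_N)\mapsto \frac1N\sum_{i=1}^N\Psi_\Delta(q_i)-\Psi_\Delta\Big(\frac1N\sum_{i=1}^N q_i\Big),$$ is convex on $\Delta_\otimes=(\Delta^{\mathcal Y})^N$. Consider the alternating scheme: choose $\bar s^{(0)}_\otimes\in\bar S_\otimes$, and for $t\ge0$ let $$q_\otimes^{(t+1)}=\operatorname*{argmin}_{q_\otimes\in\Delta_\otimes}\mathcal S_{N}(\bar s_\otimes^{(t)},q_\otimes),\qquad \bar s_\otimes^{(t+1)}\in\operatorname*{argmin}_{s_\otimes\in\bar S_\otimes}\mathcal S_{N}(s_\otimes,q_\otimes^{(t+1)}).$$ Then the iterates converge in value to the global minimum of $\mathcal S_N$ over $\bar S_\otimes\times\Delta_\otimes$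 with rate $\mathcal O(1/t)$, i.e. $\mathcal S_N(\bar s_\otimes^{(t)},q_\otimes^{(t)})-\inf_{\bar S_\otimes\times\Delta_\otimes}\mathcal S_N=\mathcal O(1/t)$.
   Context: $\Delta^{\mathcal Y}=\{q\in\mathbb R^{\mathcal Y}:q\ge0,\ \sum_y q_y=1\}$; $\mathbb I_A$ is the indicator function of $A$ (0 on $A$, $+\infty$ elsewhere). A function $\Psi:\mathbb R^m\to\mathbb R\cup\{+\infty\}$ is Legendre-type if it is strictly convex on $\operatorname{int}(\operatorname{dom}\Psi)$ and essentially smooth: $\operatorname{int}(\operatorname{dom}\Psi)\neq\emptyset$, $\Psi$ is differentiable on it, and $\|\nabla\Psi(\mu)\|\to+\infty$ as $\mu$ tends to the boundary of $\operatorname{dom}\Psi$; for the restriction to an affine subspace $H$ this is understood with respect to the induced metric of $H$. The Fenchel–Young loss is $\mathcal L_{\Omega_\Delta}(s;q)=\Omega_\Delta(q)+\Omega_\Delta^*(s)-\langle s|q\rangle$, with $\Omega_\Delta^*(s)=\sup_q\langle s|q\rangle-\Omega_\Delta(q)$. Define $S(s,q;\xi_i)=\langle\gamma_i|q\rangle+\kappa\mathcal L_{\Omega_\Delta}(s;q)$, $\bar S_\otimes=\{(s_1,\dots,s_N)\in(\mathbb R^{\mathcal Y})^N: s_1=\dots=s_N\}$, and $\mathcal S_N(s_\otimes,q_\otimes)=\frac1N\sum_{i=1}^N S(s_i,q_i;\xi_i)$. *)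

theory Defs
  imports "HOL-Analysis.Analysis" "HOL-Library.Extended_Real"
begin

definition ind_fun :: "'v set \<Rightarrow> 'v \<Rightarrow> ereal" where
  "ind_fun A x = (if x \<in> A then 0 else \<infinity>)"

definition edom :: "('v \<Rightarrow> ereal) \<Rightarrow> 'v set" where
  "edom f = {x. f x < \<infinity>}"

definition prob_simplex :: "(real ^ 'y::finite) set" where
  "prob_simplex = {q. (\<forall>y. 0 \<le> q $ y) \<and> (\<Sum>y\<in>UNIV. q $ y) = 1}"

definition proper_fun :: "('v \<Rightarrow> ereal) \<Rightarrow> bool" where
  "proper_fun f \<longleftrightarrow> (\<exists>x. f x < \<infinity>) \<and> (\<forall>x. f x > -\<infinity>)"

definition lsc_fun :: "('v::topological_space \<Rightarrow> ereal) \<Rightarrow> bool" where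
  "lsc_fun f \<longleftrightarrow> (\<forall>x. f x \<le> Liminf (at x) f)"

definition econvex :: "('v::real_vector \<Rightarrow> ereal) \<Rightarrow> bool" where
  "econvex f \<longleftrightarrow> (\<forall>x y t. 0 \<le> t \<and> t \<le> 1 \<longrightarrow>
      f (t *\<^sub>R x + (1 - t) *\<^sub>R y) \<le> ereal t * f x + ereal (1 - t) * f y)"

definition fconj :: "('v::real_inner \<Rightarrow> ereal) \<Rightarrow> 'v \<Rightarrow> ereal" where
  "fconj f s = (SUP q. ereal (s \<bullet> q) - f q)"

text \<open>Legendre type, relative to an affine subspace H (H = UNIV gives the usual notion).
 relint_dom H f: interior of dom f relative to H.  dir H: direction space of H.
 gnorm H D: norm of the gradient (w.r.t. the induced metric of H) of a derivative D.\<close>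

definition relint_dom :: "'v::real_normed_vector set \<Rightarrow> ('v \<Rightarrow> ereal) \<Rightarrow> 'v set" where
  "relint_dom H f = {x \<in> edom f. \<exists>e>0. ball x e \<inter> H \<subseteq> edom f}"

definition dir :: "'v::real_vector set \<Rightarrow> 'v set" where
  "dir H = {x - y | x y. x \<in> H \<and> y \<in> H}"

definition gnorm :: "'v::real_normed_vector set \<Rightarrow> ('v \<Rightarrow> real) \<Rightarrow> real" where
  "gnorm H D = Sup {\<bar>D v\<bar> | v. v \<in> dir H \<and> norm v = 1}"

definition legendre_on :: "'v::euclidean_space set \<Rightarrow> ('v \<Rightarrow> ereal) \<Rightarrow> bool" where
  "legendre_on H f \<longleftrightarrow>
     affine H \<and> edom f \<subseteq> H \<and>
     (let U = relint_dom H f in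
       \<comment> \<open>strict convexity on the (relative) interior of the domain\<close>
       (\<forall>x\<in>U. \<forall>y\<in>U. \<forall>t. x \<noteq> y \<and> 0 < t \<and> t < 1 \<longrightarrow>
           f (t *\<^sub>R x + (1 - t) *\<^sub>R y) < ereal t * f x + ereal (1 - t) * f y) \<and>
       \<comment> \<open>essential smoothness\<close>
       U \<noteq> {} \<and>
       (\<forall>x\<in>U. f x \<noteq> -\<infinity> \<and>
          (\<lambda>z. real_of_ereal (f z)) differentiable (at x within H)) \<and>
       (\<forall>(u::nat \<Rightarrow> 'v) b (Df::nat \<Rightarrow> 'v \<Rightarrow> real).
          (\<forall>k. u k \<in> U \<and> ((\<lambda>z. real_of_ereal (f z)) has_derivative Df k) (at (u k) within H))
          \<longrightarrow> u \<longlonglongrightarrow> b \<longrightarrow> b \<in> closure (edom f) - U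
          \<longrightarrow> filterlim (\<lambda>k. gnorm H (Df k)) at_top sequentially))"

definition fy_loss :: "(real ^ 'y::finite \<Rightarrow> ereal) \<Rightarrow> real ^ 'y \<Rightarrow> real ^ 'y \<Rightarrow> ereal" where
  "fy_loss \<Omega> s q = \<Omega> q + fconj \<Omega> s - ereal (s \<bullet> q)"

definition gam :: "(real ^ 'd \<Rightarrow> 'xi \<Rightarrow> real) \<Rightarrow> ('y::finite \<Rightarrow> real ^ 'd) \<Rightarrow> 'xi \<Rightarrow> real ^ 'y" where
  "gam c emb xi = (\<chi> y. c (emb y) xi)"

definition S_single :: "(real ^ 'y::finite \<Rightarrow> ereal) \<Rightarrow> real \<Rightarrow> real ^ 'y \<Rightarrow> real ^ 'y \<Rightarrow> real ^ 'y \<Rightarrow> ereal" where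
  "S_single \<Omega> \<kappa> g s q = ereal (g \<bullet> q) + ereal \<kappa> * fy_loss \<Omega> s q"

definition S_N :: "(real ^ 'y::finite \<Rightarrow> ereal) \<Rightarrow> real \<Rightarrow> nat \<Rightarrow> (nat \<Rightarrow> real ^ 'y)
                   \<Rightarrow> (nat \<Rightarrow> real ^ 'y) \<Rightarrow> (nat \<Rightarrow> real ^ 'y) \<Rightarrow> ereal" where
  "S_N \<Omega> \<kappa> N g s q = ereal (1 / real N) * (\<Sum>i<N. S_single \<Omega> \<kappa> (g i) (s i) (q i))"

definition jensen_gap :: "(real ^ 'y::finite \<Rightarrow> ereal) \<Rightarrow> nat \<Rightarrow> (nat \<Rightarrow> real ^ 'y) \<Rightarrow> real" where
  "jensen_gap \<Psi> N q = (1 / real N) * (\<Sum>i<N. real_of_ereal (\<Psi> (q i)))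
       - real_of_ereal (\<Psi> ((1 / real N) *\<^sub>R (\<Sum>i<N. q i)))"

end

theory Submission
  imports Defs
begin

text \<open>
  For a common score \<open>s\<close> the objective splits as \<open>S_N(s, q) = R(q) + \<kappa> L(s; avg q)\<close>, where
  \<open>L\<close> is the Fenchel-Young loss of \<open>\<Omega>\<close> and \<open>R(q) = (1/N) \<Sigma>\<^sub>i \<langle>\<gamma>\<^sub>i|q\<^sub>i\<rangle> + \<kappa> J(q)\<close> with \<open>J\<close> the
  Jensen gap of \<open>\<Omega>\<close>. Essential smoothness of \<open>\<Omega>\<close> puts every \<open>q\<close>-step minimizer in the
  relative interior of the simplex, where the first-order conditions hold; with the convexity of
  \<open>J\<close> and the Fenchel-Young equality at the \<open>s\<close>-step minimizer they give, for every \<open>p\<close>,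
  the three-point inequality
    \<open>S_N(s(t+1), q(t+1)) + \<kappa> L(s(t+1); avg p) \<le> R(p) + \<kappa> L(s(t); avg p)\<close>.
  Since the values \<open>S_N(s(t), q(t))\<close> do not increase for \<open>t \<ge> 1\<close>, telescoping gives
  \<open>S_N(s(T), q(T)) \<le> R(p) + \<kappa> L(s(0); avg p) / T\<close>, and \<open>L(s(0); \<cdot>)\<close> is bounded on the simplex.
\<close>

section \<open>Derivatives of convex functions\<close>

lemma difference_quotient_limit_le_secant:
  fixes \<phi> :: "real \<Rightarrow> real"
  assumes lim: "((\<lambda>t. (\<phi> t - \<phi> 0) / t) \<longlongrightarrow> L) (at_right 0)"
    and convex: "\<And>t. 0 < t \<Longrightarrow> t < 1 \<Longrightarrow> \<phi> t \<le> (1 - t) * \<phi> 0 + t * \<phi> 1"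
  shows "L \<le> \<phi> 1 - \<phi> 0"
proof (rule tendsto_upperbound[OF lim])
  show "\<forall>\<^sub>F t in at_right 0. (\<phi> t - \<phi> 0) / t \<le> \<phi> 1 - \<phi> 0"
    unfolding eventually_at_right_field
  proof (intro exI[of _ 1] conjI allI impI)
    fix t :: real assume t: "0 < t" "t < 1"
    have "\<phi> t - \<phi> 0 \<le> t * (\<phi> 1 - \<phi> 0)"
      using convex[OF t] by (simp add: algebra_simps)
    then show "(\<phi> t - \<phi> 0) / t \<le> \<phi> 1 - \<phi> 0"
      using t by (simp add: divide_le_eq mult.commute)
  qed simp
qed simp

lemma has_derivative_difference_quotient_at_right:
  fixes f :: "'a::real_normed_vector \<Rightarrow> real"
  assumes D: "(f has_derivative D) (at u within S)"
    and S: "convex S" "u \<in> S" "x \<in> S"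
  shows "((\<lambda>t. (f (u + t *\<^sub>R (x - u)) - f u) / t) \<longlongrightarrow> D (x - u)) (at_right 0)"
proof -
  let ?line = "\<lambda>t::real. u + t *\<^sub>R (x - u)"
  have "?line ` {0..1} \<subseteq> S"
  proof
    fix z assume "z \<in> ?line ` {0..1}"
    then obtain t where "0 \<le> t" "t \<le> 1" "z = (1 - t) *\<^sub>R u + t *\<^sub>R x"
      by (auto simp: algebra_simps)
    then show "z \<in> S" using S by (auto intro: convexD_alt)
  qed
  then have "(f has_derivative D) (at (?line 0) within ?line ` {0..1})"
    using D by (auto intro: has_derivative_subset)
  moreover have "(?line has_derivative (\<lambda>t. t *\<^sub>R (x - u))) (at 0 within {0..1})"
    by (auto intro!: derivative_eq_intros)
  ultimately have "((\<lambda>t. f (?line t)) has_derivative (\<lambda>t. D (t *\<^sub>R (x - u)))) (at 0 within {0..1})"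
    by (rule has_derivative_in_compose[of ?line, unfolded o_def, rotated])
  moreover have "(\<lambda>t. D (t *\<^sub>R (x - u))) = (*) (D (x - u))"
    using linear_scale[OF has_derivative_linear[OF D]] by (auto simp: fun_eq_iff)
  ultimately have "((\<lambda>t. f (?line t)) has_field_derivative D (x - u)) (at 0 within {0..1})"
    by (simp add: has_field_derivative_def)
  then show ?thesis
    by (simp add: has_field_derivative_iff at_within_Icc_at_right)
qed

lemma convex_on_derivative_le:
  fixes f :: "'a::real_normed_vector \<Rightarrow> real"
  assumes f: "convex_on S f" and D: "(f has_derivative D) (at u within S)"
    and S: "u \<in> S" "x \<in> S"
  shows "D (x - u) \<le> f x - f u"
proof -
  have "D (x - u) \<le> f (u + 1 *\<^sub>R (x - u)) - f (u + 0 *\<^sub>R (x - u))"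
  proof (rule difference_quotient_limit_le_secant)
    show "((\<lambda>t. (f (u + t *\<^sub>R (x - u)) - f (u + 0 *\<^sub>R (x - u))) / t) \<longlongrightarrow> D (x - u)) (at_right 0)"
      using has_derivative_difference_quotient_at_right[OF D convex_on_imp_convex[OF f] S] by simp
    fix t :: real assume t: "0 < t" "t < 1"
    have "f (u + t *\<^sub>R (x - u)) = f ((1 - t) *\<^sub>R u + t *\<^sub>R x)"
      by (simp add: algebra_simps)
    also have "\<dots> \<le> (1 - t) * f u + t * f x"
      using t S by (intro convex_onD[OF f]) auto
    finally show "f (u + t *\<^sub>R (x - u))
        \<le> (1 - t) * f (u + 0 *\<^sub>R (x - u)) + t * f (u + 1 *\<^sub>R (x - u))"
      by simp
  qed
  then show ?thesis by simp
qed

lemma subgradient_le_derivative: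
  fixes f :: "'a::real_inner \<Rightarrow> real"
  assumes sub: "\<forall>z\<in>S. f u + \<sigma> \<bullet> (z - u) \<le> f z" and D: "(f has_derivative D) (at u within S)"
    and S: "convex S" "u \<in> S" "x \<in> S"
  shows "\<sigma> \<bullet> (x - u) \<le> D (x - u)"
proof (rule tendsto_lowerbound)
  show "((\<lambda>t. (f (u + t *\<^sub>R (x - u)) - f u) / t) \<longlongrightarrow> D (x - u)) (at_right 0)"
    by (rule has_derivative_difference_quotient_at_right[OF D S])
  show "\<forall>\<^sub>F t in at_right 0. \<sigma> \<bullet> (x - u) \<le> (f (u + t *\<^sub>R (x - u)) - f u) / t"
    unfolding eventually_at_right_field
  proof (intro exI[of _ 1] conjI allI impI)
    fix t :: real assume t: "0 < t" "t < 1"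
    have "(1 - t) *\<^sub>R u + t *\<^sub>R x \<in> S"
      using t S by (intro convexD_alt) auto
    then have "f u + \<sigma> \<bullet> (t *\<^sub>R (x - u)) \<le> f (u + t *\<^sub>R (x - u))"
      using sub by (force simp: algebra_simps)
    then show "\<sigma> \<bullet> (x - u) \<le> (f (u + t *\<^sub>R (x - u)) - f u) / t"
      using t by (simp add: le_divide_eq algebra_simps)
  qed simp
qed simp

lemma subgradient_eq_derivative:
  fixes f :: "'a::real_inner \<Rightarrow> real"
  assumes sub: "\<forall>z\<in>S. f u + \<sigma> \<bullet> (z - u) \<le> f z" and D: "(f has_derivative D) (at u within S)"
    and S: "convex S" "u \<in> S" and d: "\<delta> > 0" "u + \<delta> *\<^sub>R d \<in> S" "u - \<delta> *\<^sub>R d \<in> S"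
  shows "D d = \<sigma> \<bullet> d"
proof -
  have lin: "linear D" by (rule has_derivative_linear[OF D])
  have "\<sigma> \<bullet> (\<delta> *\<^sub>R d) \<le> D (\<delta> *\<^sub>R d)"
    using subgradient_le_derivative[OF sub D S d(2)] by simp
  moreover have "\<sigma> \<bullet> (- \<delta> *\<^sub>R d) \<le> D (- \<delta> *\<^sub>R d)"
    using subgradient_le_derivative[OF sub D S d(3)] by simp
  ultimately show ?thesis
    using d(1) by (simp add: linear_scale[OF lin] linear_neg[OF lin])
qed

lemma linear_eq_inner_adjoint:
  fixes D :: "'a::euclidean_space \<Rightarrow> real"
  assumes "linear D"
  shows "D x = adjoint D 1 \<bullet> x"
  using adjoint_works[OF assms, of x 1] by (simp add: inner_commute)

lemma dir_scaleR:
  assumes "affine H" "w \<in> dir H"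
  shows "c *\<^sub>R w \<in> dir H"
proof -
  obtain x y where w: "w = x - y" "x \<in> H" "y \<in> H"
    using assms(2) unfolding dir_def by blast
  then have "c *\<^sub>R x + (1 - c) *\<^sub>R y \<in> H"
    using assms(1) by (intro mem_affine) auto
  moreover have "c *\<^sub>R w = (c *\<^sub>R x + (1 - c) *\<^sub>R y) - y"
    by (simp add: w algebra_simps)
  ultimately show ?thesis
    using w unfolding dir_def by blast
qed

lemma gnorm_le:
  assumes H: "affine H" and lin: "linear D" and w0: "w0 \<in> dir H" "w0 \<noteq> 0"
    and bound: "\<And>w. w \<in> dir H \<Longrightarrow> norm w = 1 \<Longrightarrow> D w \<le> K"
  shows "gnorm H D \<le> K"
  unfolding gnorm_def
proof (rule cSup_least)
  have "(1 / norm w0) *\<^sub>R w0 \<in> dir H" "norm ((1 / norm w0) *\<^sub>R w0) = 1"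
    using dir_scaleR[OF H w0(1)] w0(2) by auto
  then show "{\<bar>D v\<bar> |v. v \<in> dir H \<and> norm v = 1} \<noteq> {}" by blast
next
  fix r assume "r \<in> {\<bar>D v\<bar> |v. v \<in> dir H \<and> norm v = 1}"
  then obtain w where w: "r = \<bar>D w\<bar>" "w \<in> dir H" "norm w = 1" by blast
  have "D (- w) \<le> K"
    using bound dir_scaleR[OF H w(2), of "-1"] w(3) by simp
  then show "r \<le> K"
    using bound[OF w(2,3)] linear_neg[OF lin, of w] w(1) by linarith
qed

lemma decreasing_telescoping_rate:
  fixes V R :: "nat \<Rightarrow> real"
  assumes dec: "\<And>t. t \<ge> 1 \<Longrightarrow> V (Suc t) \<le> V t"
    and R: "\<And>t. R t \<ge> 0"
    and tele: "\<And>t. V (Suc t) + R (Suc t) \<le> c + R t"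
    and T: "T \<ge> 1"
  shows "V T \<le> c + R 0 / real T"
proof -
  have sum: "(\<Sum>t\<in>{1..n}. V t) + R n \<le> real n * c + R 0" for n
  proof (induction n)
    case (Suc n)
    then show ?case using tele[of n] by (simp add: algebra_simps)
  qed simp
  have "V T \<le> V t" if "1 \<le> t" "t \<le> T" for t
    using that(2,1) by (induction rule: dec_induct) (auto intro: order_trans[OF dec])
  then have "real T * V T \<le> (\<Sum>t\<in>{1..T}. V t)"
    using sum_mono[of "{1..T}" "\<lambda>_. V T" V] by simp
  then have "real T * V T \<le> real T * c + R 0"
    using sum[of T] R[of T] by linarith
  then show ?thesis
    using T by (simp add: field_simps)
qed

lemma ereal_minus_INF_le:
  assumes "\<And>a. a \<in> A \<Longrightarrow> ereal (v - c) \<le> F a"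
  shows "ereal v - (INF a\<in>A. F a) \<le> ereal c"
proof -
  have "ereal (v - c) \<le> (INF a\<in>A. F a)"
    using assms by (rule INF_greatest)
  then show ?thesis
    by (cases "INF a\<in>A. F a") auto
qed

section \<open>The probability simplex\<close>

lemma prob_simplex_component_le_1:
  assumes "x \<in> prob_simplex"
  shows "x $ y \<le> 1"
proof -
  have "x $ y \<le> (\<Sum>z\<in>UNIV. x $ z)"
    using assms by (intro member_le_sum) (auto simp: prob_simplex_def)
  then show ?thesis using assms by (simp add: prob_simplex_def)
qed

lemma prob_simplex_norm_le_1:
  assumes "x \<in> prob_simplex"
  shows "norm x \<le> 1"
  using norm_le_l1_cart[of x] assms by (simp add: prob_simplex_def)

lemma convex_prob_simplex: "convex prob_simplex"
  unfolding convex_def prob_simplex_def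
  by (auto simp: sum.distrib sum_distrib_left[symmetric])

lemma axis_in_prob_simplex: "axis y 1 \<in> prob_simplex"
  by (auto simp: prob_simplex_def axis_def)

lemma sum_eq_1_of_affine_hull_prob_simplex:
  assumes "x \<in> affine hull prob_simplex"
  shows "(\<Sum>y\<in>UNIV. x $ y) = 1"
proof -
  have "affine {x::real^'y. (\<Sum>y\<in>UNIV. x $ y) = 1}"
    unfolding affine_def by (simp add: sum.distrib sum_distrib_left[symmetric])
  then have "affine hull prob_simplex \<subseteq> {x::real^'y. (\<Sum>y\<in>UNIV. x $ y) = 1}"
    by (intro hull_minimal) (auto simp: prob_simplex_def)
  then show ?thesis using assms by auto
qed

lemma sum_eq_0_of_dir_affine_hull_prob_simplex:
  assumes "w \<in> dir (affine hull prob_simplex)"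
  shows "(\<Sum>y\<in>UNIV. w $ y) = 0"
  using assms unfolding dir_def by (auto simp: sum_subtractf sum_eq_1_of_affine_hull_prob_simplex)

lemma diff_in_dir_affine_hull_prob_simplex:
  assumes "x \<in> prob_simplex" "z \<in> prob_simplex"
  shows "x - z \<in> dir (affine hull prob_simplex)"
  using assms hull_subset[of prob_simplex] unfolding dir_def by blast

definition barycenter :: "real ^ 'y::finite" where
  "barycenter = (\<chi> y. 1 / real CARD('y))"

lemma barycenter_in_prob_simplex: "barycenter \<in> prob_simplex"
  by (simp add: prob_simplex_def barycenter_def)

lemma barycenter_add_in_prob_simplex:
  assumes "(\<Sum>y\<in>UNIV. w $ y) = 0" "norm w \<le> 1"
  shows "barycenter + (1 / real CARD('y)) *\<^sub>R w \<in> (prob_simplex :: (real ^ 'y::finite) set)"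
proof -
  have "- 1 \<le> w $ y" for y
    using component_le_norm_cart[of w y] assms(2) by simp
  then have "0 \<le> 1 / real CARD('y) + 1 / real CARD('y) * w $ y" for y
    using mult_left_mono[of "-1" "w $ y" "1 / real CARD('y)"] by simp
  then show ?thesis
    using assms(1)
    by (simp add: prob_simplex_def barycenter_def sum.distrib sum_divide_distrib[symmetric])
qed

lemma convex_on_prob_simplex_le:
  assumes f: "convex_on prob_simplex f" and x: "x \<in> prob_simplex"
  shows "f x \<le> (\<Sum>y\<in>UNIV. \<bar>f (axis y 1)\<bar>)"
proof -
  have "f x = f (\<Sum>y\<in>UNIV. x $ y *\<^sub>R axis y 1)"
    using basis_expansion[of x] by (simp add: scalar_mult_eq_scaleR)
  also have "\<dots> \<le> (\<Sum>y\<in>UNIV. x $ y * f (axis y 1))"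
    using x by (intro convex_on_sum[OF _ _ f] axis_in_prob_simplex) (auto simp: prob_simplex_def)
  also have "\<dots> \<le> (\<Sum>y\<in>UNIV. \<bar>f (axis y 1)\<bar>)"
  proof (rule sum_mono)
    fix y
    have "0 \<le> x $ y" "x $ y \<le> 1"
      using x prob_simplex_component_le_1 by (auto simp: prob_simplex_def)
    then show "x $ y * f (axis y 1) \<le> \<bar>f (axis y 1)\<bar>"
      by (metis abs_ge_self abs_mult abs_of_nonneg mult_left_le_one_le abs_ge_zero order_trans)
  qed
  finally show ?thesis .
qed

lemma barycenter_reflection_in_prob_simplex:
  assumes x: "x \<in> prob_simplex"
  shows "(1 + 1 / real CARD('y)) *\<^sub>R barycenter - (1 / real CARD('y)) *\<^sub>R x
      \<in> (prob_simplex :: (real ^ 'y::finite) set)"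
proof -
  have "x $ y / real CARD('y) \<le> (1 + 1 / real CARD('y)) / real CARD('y)" for y
    using prob_simplex_component_le_1[OF x, of y] by (intro divide_right_mono add_increasing2) auto
  then show ?thesis
    using x by (simp add: barycenter_def prob_simplex_def sum_subtractf
      sum_divide_distrib[symmetric])
qed

lemma convex_on_prob_simplex_bounded:
  fixes f :: "real ^ 'y::finite \<Rightarrow> real"
  assumes f: "convex_on prob_simplex f"
  obtains B where "\<And>x. x \<in> prob_simplex \<Longrightarrow> \<bar>f x\<bar> \<le> B"
proof
  define M where "M = (\<Sum>y\<in>UNIV. \<bar>f (axis y 1)\<bar>)"
  define e where "e = 1 / real CARD('y)"
  have e: "e > 0"
    by (simp add: e_def)
  fix x :: "real ^ 'y" assume x: "x \<in> prob_simplex"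
  define z where "z = (1 + e) *\<^sub>R barycenter - e *\<^sub>R x"
  have z: "z \<in> prob_simplex"
    unfolding z_def e_def by (rule barycenter_reflection_in_prob_simplex[OF x])
  define t where "t = e / (1 + e)"
  have t: "0 \<le> t" "t \<le> 1" "(1 + e) * (1 - t) = 1" "(1 + e) * t = e" "(1 - t) * e = t"
    using e by (auto simp: t_def field_simps)
  have "(1 - t) *\<^sub>R z = barycenter - t *\<^sub>R x"
    using t(3,5) by (simp add: z_def scaleR_diff_right mult.commute)
  then have "f barycenter \<le> (1 - t) * f z + t * f x"
    using convex_onD[OF f t(1,2) z x] by (simp add: algebra_simps)
  also have "\<dots> \<le> (1 - t) * M + t * f x"
    using convex_on_prob_simplex_le[OF f z] t(1,2) by (simp add: M_def mult_left_mono)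
  finally have "(1 + e) * f barycenter \<le> (1 + e) * ((1 - t) * M + t * f x)"
    using e by (intro mult_left_mono) auto
  also have "\<dots> = M + e * f x"
    using t(3,4) by (simp add: distrib_left flip: mult.assoc)
  finally have "(1 + e) * f barycenter \<le> M + e * f x" .
  then have "((1 + e) * f barycenter - M) / e \<le> f x"
    using e by (simp add: field_simps)
  moreover have "f x \<le> M"
    unfolding M_def by (rule convex_on_prob_simplex_le[OF f x])
  ultimately show "\<bar>f x\<bar> \<le> \<bar>M\<bar> + \<bar>((1 + e) * f barycenter - M) / e\<bar>"
    by arith
qed

definition relint_prob_simplex :: "(real ^ 'y::finite) set" where
  "relint_prob_simplex = {x \<in> prob_simplex. \<forall>y. 0 < x $ y}"

lemma relint_prob_simplex_subset: "relint_prob_simplex \<subseteq> prob_simplex"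
  by (auto simp: relint_prob_simplex_def)

lemma relint_prob_simplex_if_ball_subset:
  assumes x: "x \<in> prob_simplex" and e: "e > 0" "ball x e \<inter> affine hull prob_simplex \<subseteq> prob_simplex"
  shows "x \<in> relint_prob_simplex"
proof -
  have "0 < x $ y" for y
  proof (rule ccontr)
    assume "\<not> 0 < x $ y"
    then have x0: "x $ y = 0"
      using x by (auto simp: prob_simplex_def intro: antisym)
    define z where "z = (1 + e / 4) *\<^sub>R x + (- (e / 4)) *\<^sub>R axis y 1"
    have "z \<in> affine hull prob_simplex"
      unfolding z_def
      by (rule mem_affine[OF affine_affine_hull]) (auto intro: hull_inc x axis_in_prob_simplex)
    moreover have "dist x z < e"
    proof -
      have "norm (x - axis y 1) \<le> 2"
        using norm_triangle_ineq4[of x "axis y 1"] prob_simplex_norm_le_1[OF x]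
          prob_simplex_norm_le_1[OF axis_in_prob_simplex, of y] by linarith
      then have "e / 4 * norm (x - axis y 1) < e"
        using e by simp
      then show ?thesis
        using e by (simp add: z_def dist_norm algebra_simps norm_minus_commute
            flip: scaleR_diff_right)
    qed
    ultimately have "z \<in> prob_simplex"
      using e by auto
    moreover have "z $ y < 0"
      using x0 e by (simp add: z_def)
    ultimately show False
      by (auto simp: prob_simplex_def dest: spec[of _ y])
  qed
  then show ?thesis
    using x by (simp add: relint_prob_simplex_def)
qed

lemma ball_subset_prob_simplex_if_relint:
  assumes x: "x \<in> relint_prob_simplex"
  obtains e where "e > 0" "ball x e \<inter> affine hull prob_simplex \<subseteq> prob_simplex"
proof
  define m where "m = Min (range (\<lambda>y. x $ y))"
  have m: "m > 0" "\<And>y. m \<le> x $ y"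
    using x by (auto simp: m_def relint_prob_simplex_def)
  then show "m > 0" by simp
  show "ball x m \<inter> affine hull prob_simplex \<subseteq> prob_simplex"
  proof
    fix z assume z: "z \<in> ball x m \<inter> affine hull prob_simplex"
    have "0 \<le> z $ y" for y
      using component_le_norm_cart[of "x - z" y] z m(2)[of y] by (auto simp: dist_norm)
    moreover have "(\<Sum>y\<in>UNIV. z $ y) = 1"
      using z sum_eq_1_of_affine_hull_prob_simplex by auto
    ultimately show "z \<in> prob_simplex"
      by (simp add: prob_simplex_def)
  qed
qed

lemma dir_affine_hull_prob_simplex_nonzero:
  fixes b :: "real ^ 'y::finite"
  assumes b: "b \<in> prob_simplex" "b \<notin> relint_prob_simplex"
  obtains w :: "real ^ 'y" where "w \<in> dir (affine hull prob_simplex)" "w \<noteq> 0"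
proof -
  obtain y where y: "b $ y = 0"
    using b by (auto simp: relint_prob_simplex_def prob_simplex_def order_le_less)
  obtain y' where y': "b $ y' \<noteq> 0"
  proof (rule ccontr)
    assume "\<not> thesis"
    with that have "\<forall>y. b $ y = 0" by blast
    then have "(\<Sum>y\<in>UNIV. b $ y) = 0" by simp
    with b show False by (simp add: prob_simplex_def)
  qed
  define w where "w = axis y 1 - axis y' (1::real)"
  have "w \<in> dir (affine hull prob_simplex)"
    unfolding w_def
    by (rule diff_in_dir_affine_hull_prob_simplex[OF axis_in_prob_simplex axis_in_prob_simplex])
  moreover have "w $ y = 1"
    using y y' by (auto simp: w_def axis_def)
  then have "w \<noteq> 0"
    by force
  ultimately show ?thesis
    by (rule that)
qed

lemma relint_dom_affine_hull_prob_simplex: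
  fixes f :: "real ^ 'y::finite \<Rightarrow> ereal"
  assumes dom: "edom f = prob_simplex"
  shows "relint_dom (affine hull prob_simplex) f = relint_prob_simplex"
proof (intro set_eqI iffI)
  fix x :: "real ^ 'y" assume "x \<in> relint_dom (affine hull prob_simplex) f"
  then show "x \<in> relint_prob_simplex"
    using dom relint_prob_simplex_if_ball_subset by (auto simp: relint_dom_def)
next
  fix x :: "real ^ 'y" assume x: "x \<in> relint_prob_simplex"
  then obtain e where "e > 0" "ball x e \<inter> affine hull prob_simplex \<subseteq> prob_simplex"
    by (rule ball_subset_prob_simplex_if_relint)
  then show "x \<in> relint_dom (affine hull prob_simplex) f"
    using dom x relint_prob_simplex_subset by (auto simp: relint_dom_def)
qed

lemma relint_prob_simplex_add_in_prob_simplex: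
  assumes x: "x \<in> relint_prob_simplex" and d: "(\<Sum>y\<in>UNIV. d $ y) = 0"
  obtains \<delta> where "\<delta> > 0" "\<And>t. \<bar>t\<bar> \<le> \<delta> \<Longrightarrow> x + t *\<^sub>R d \<in> prob_simplex"
proof
  define m where "m = Min (range (\<lambda>y. x $ y))"
  have m: "m > 0" "\<And>y. m \<le> x $ y"
    using x by (auto simp: m_def relint_prob_simplex_def)
  show "m / (1 + norm d) > 0"
    using m by (simp add: add_pos_nonneg)
  fix t assume t: "\<bar>t\<bar> \<le> m / (1 + norm d)"
  have "0 \<le> x $ y + t * d $ y" for y
  proof -
    have "\<bar>t * d $ y\<bar> \<le> \<bar>t\<bar> * norm d"
      by (simp add: abs_mult component_le_norm_cart mult_left_mono)
    also have "\<dots> \<le> m / (1 + norm d) * norm d"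
      using t by (intro mult_right_mono) auto
    also have "\<dots> \<le> m"
      using m by (simp add: divide_le_eq add_pos_nonneg)
    finally show ?thesis
      using m(2)[of y] by linarith
  qed
  moreover have "(\<Sum>y\<in>UNIV. x $ y + t * d $ y) = 1"
    using x d by (simp add: sum.distrib sum_distrib_left[symmetric] relint_prob_simplex_def
        prob_simplex_def)
  ultimately show "x + t *\<^sub>R d \<in> prob_simplex"
    by (simp add: prob_simplex_def)
qed

lemma segment_to_barycenter_in_relint_prob_simplex:
  fixes b :: "real ^ 'y::finite"
  assumes b: "b \<in> prob_simplex" and l: "0 < l" "l \<le> 1"
  shows "b + l *\<^sub>R (barycenter - b) \<in> relint_prob_simplex"
proof -
  have eq: "b + l *\<^sub>R (barycenter - b) = (1 - l) *\<^sub>R b + l *\<^sub>R barycenter"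
    by (simp add: algebra_simps)
  have "(1 - l) *\<^sub>R b + l *\<^sub>R barycenter \<in> prob_simplex"
    using b l by (intro convexD_alt[OF convex_prob_simplex b barycenter_in_prob_simplex]) auto
  moreover have "0 < (1 - l) * b $ y + l * (1 / real CARD('y))" for y
    using b l by (intro add_nonneg_pos) (auto simp: prob_simplex_def)
  ultimately show ?thesis
    unfolding eq relint_prob_simplex_def by (simp add: barycenter_def)
qed

definition avg :: "nat \<Rightarrow> (nat \<Rightarrow> 'a::real_vector) \<Rightarrow> 'a" where
  "avg N p = (1 / real N) *\<^sub>R (\<Sum>i<N. p i)"

lemma inner_avg_right: "s \<bullet> avg N p = (1 / real N) * (\<Sum>i<N. s \<bullet> p i)"
  by (simp add: avg_def inner_sum_right)

lemma avg_in_prob_simplex: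
  assumes "N \<ge> 1" "\<And>i. i < N \<Longrightarrow> p i \<in> prob_simplex"
  shows "avg N p \<in> prob_simplex"
proof -
  have "0 \<le> avg N p $ y" for y
    using assms by (auto simp: avg_def prob_simplex_def intro!: sum_nonneg divide_nonneg_nonneg)
  moreover have "(\<Sum>y\<in>UNIV. avg N p $ y) = (1 / real N) * (\<Sum>i<N. \<Sum>y\<in>UNIV. p i $ y)"
    by (simp add: avg_def sum_divide_distrib[symmetric] sum.swap[of _ UNIV])
  moreover have "(\<Sum>i<N. \<Sum>y\<in>UNIV. p i $ y) = real N"
    using assms by (simp add: prob_simplex_def)
  ultimately show ?thesis
    using assms by (simp add: prob_simplex_def)
qed

lemma avg_in_relint_prob_simplex:
  assumes "N \<ge> 1" "\<And>i. i < N \<Longrightarrow> p i \<in> relint_prob_simplex"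
  shows "avg N p \<in> relint_prob_simplex"
proof -
  have "0 < (\<Sum>i<N. p i $ y)" for y
    using assms by (intro sum_pos) (auto simp: relint_prob_simplex_def lessThan_empty_iff)
  then show ?thesis
    using assms avg_in_prob_simplex[of N p] relint_prob_simplex_subset
    by (auto simp: relint_prob_simplex_def avg_def)
qed

lemma avg_add_scaleR_diff:
  "avg N (\<lambda>i. q i + t *\<^sub>R (p i - q i)) = avg N q + t *\<^sub>R (avg N p - avg N q)"
  by (simp add: avg_def sum.distrib sum_subtractf scaleR_add_right scaleR_diff_right
      flip: scaleR_sum_right)

section \<open>Regularizers with the simplex as domain\<close>

locale simplex_regularizer =
  fixes \<Omega> :: "real ^ 'y::finite \<Rightarrow> ereal"
  assumes proper: "proper_fun \<Omega>" and dom: "edom \<Omega> = prob_simplex"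
    and convex: "econvex \<Omega>" and legendre: "legendre_on (affine hull prob_simplex) \<Omega>"
begin

definition \<omega> :: "real ^ 'y \<Rightarrow> real" where
  "\<omega> x = real_of_ereal (\<Omega> x)"

lemma \<Omega>_eq: "x \<in> prob_simplex \<Longrightarrow> \<Omega> x = ereal (\<omega> x)"
  using proper dom by (cases "\<Omega> x") (auto simp: \<omega>_def edom_def proper_fun_def)

lemma \<Omega>_outside: "x \<notin> prob_simplex \<Longrightarrow> \<Omega> x = \<infinity>"
  using dom by (auto simp: edom_def)

lemma convex_on_\<omega>: "convex_on prob_simplex \<omega>"
proof (rule convex_onI)
  fix t :: real and x y :: "real ^ 'y" assume t: "0 < t" "t < 1"
    and xy: "x \<in> prob_simplex" "y \<in> prob_simplex"
  have "\<Omega> ((1 - t) *\<^sub>R x + t *\<^sub>R y) \<le> ereal (1 - t) * \<Omega> x + ereal t * \<Omega> y"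
    using convex t unfolding econvex_def by (elim allE[of _ x] allE[of _ y] allE[of _ "1 - t"]) simp
  moreover have "(1 - t) *\<^sub>R x + t *\<^sub>R y \<in> prob_simplex"
    using t xy by (intro convexD_alt[OF convex_prob_simplex]) auto
  ultimately show "\<omega> ((1 - t) *\<^sub>R x + t *\<^sub>R y) \<le> (1 - t) * \<omega> x + t * \<omega> y"
    using xy by (simp add: \<Omega>_eq)
qed (rule convex_prob_simplex)

lemma \<omega>_bounded:
  obtains B where "\<And>x. x \<in> prob_simplex \<Longrightarrow> \<bar>\<omega> x\<bar> \<le> B"
  using convex_on_prob_simplex_bounded[OF convex_on_\<omega>] by blast

definition \<omega>_conj :: "real ^ 'y \<Rightarrow> real" where
  "\<omega>_conj s = real_of_ereal (fconj \<Omega> s)"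

lemma fconj_\<Omega>_eq: "fconj \<Omega> s = (SUP x\<in>prob_simplex. ereal (s \<bullet> x - \<omega> x))"
proof -
  have "fconj \<Omega> s = (SUP x. ereal (s \<bullet> x) - \<Omega> x)" by (simp add: fconj_def)
  also have "\<dots> = (SUP x\<in>prob_simplex \<union> - prob_simplex. ereal (s \<bullet> x) - \<Omega> x)"
    by simp
  also have "\<dots> = (SUP x\<in>prob_simplex. ereal (s \<bullet> x - \<omega> x))"
    unfolding SUP_union by (simp add: \<Omega>_eq \<Omega>_outside SUP_constant bot_ereal_def)
  finally show ?thesis .
qed

lemma fconj_\<Omega>_finite: "fconj \<Omega> s = ereal (\<omega>_conj s)"
proof -
  obtain B where B: "\<And>x. x \<in> prob_simplex \<Longrightarrow> \<bar>\<omega> x\<bar> \<le> B"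
    using \<omega>_bounded by blast
  have "s \<bullet> x - \<omega> x \<le> norm s + B" if x: "x \<in> prob_simplex" for x
  proof -
    have "s \<bullet> x \<le> norm s * norm x" by (rule norm_cauchy_schwarz)
    also have "\<dots> \<le> norm s"
      using prob_simplex_norm_le_1[OF x] by (simp add: mult_left_le)
    finally show ?thesis using B[OF x] by linarith
  qed
  then have "fconj \<Omega> s \<le> ereal (norm s + B)"
    unfolding fconj_\<Omega>_eq by (intro SUP_least) auto
  moreover have "ereal (s \<bullet> barycenter - \<omega> barycenter) \<le> fconj \<Omega> s"
    unfolding fconj_\<Omega>_eq by (intro SUP_upper barycenter_in_prob_simplex)
  ultimately show ?thesis
    unfolding \<omega>_conj_def by (cases "fconj \<Omega> s") auto
qed

lemma fenchel_young: "x \<in> prob_simplex \<Longrightarrow> s \<bullet> x - \<omega> x \<le> \<omega>_conj s"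
  using SUP_upper[of x prob_simplex "\<lambda>x. ereal (s \<bullet> x - \<omega> x)"]
  by (simp add: fconj_\<Omega>_finite flip: fconj_\<Omega>_eq)

lemma \<omega>_conj_eq_iff_subgradient:
  assumes a: "a \<in> prob_simplex"
  shows "\<omega>_conj \<sigma> = \<sigma> \<bullet> a - \<omega> a \<longleftrightarrow> (\<forall>z\<in>prob_simplex. \<omega> a + \<sigma> \<bullet> (z - a) \<le> \<omega> z)"
proof
  assume "\<omega>_conj \<sigma> = \<sigma> \<bullet> a - \<omega> a"
  then show "\<forall>z\<in>prob_simplex. \<omega> a + \<sigma> \<bullet> (z - a) \<le> \<omega> z"
    using fenchel_young[of _ \<sigma>] by (fastforce simp: inner_diff_right)
next
  assume sub: "\<forall>z\<in>prob_simplex. \<omega> a + \<sigma> \<bullet> (z - a) \<le> \<omega> z"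
  have "fconj \<Omega> \<sigma> \<le> ereal (\<sigma> \<bullet> a - \<omega> a)"
    unfolding fconj_\<Omega>_eq using sub by (intro SUP_least) (force simp: inner_diff_right)
  then show "\<omega>_conj \<sigma> = \<sigma> \<bullet> a - \<omega> a"
    using fenchel_young[OF a, of \<sigma>] by (simp add: fconj_\<Omega>_finite)
qed

lemma relint_dom_\<Omega>: "relint_dom (affine hull prob_simplex) \<Omega> = relint_prob_simplex"
  by (rule relint_dom_affine_hull_prob_simplex[OF dom])

lemma \<omega>_eta: "(\<lambda>x. real_of_ereal (\<Omega> x)) = \<omega>"
  by (simp add: fun_eq_iff \<omega>_def)

lemma \<omega>_differentiable:
  assumes "x \<in> relint_prob_simplex"
  shows "\<omega> differentiable (at x within affine hull prob_simplex)"
proof -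
  have "\<forall>x\<in>relint_dom (affine hull prob_simplex) \<Omega>. \<Omega> x \<noteq> -\<infinity> \<and>
      (\<lambda>z. real_of_ereal (\<Omega> z)) differentiable (at x within affine hull prob_simplex)"
    using legendre unfolding legendre_on_def Let_def by (elim conjE) assumption
  then show ?thesis
    using assms unfolding relint_dom_\<Omega> \<omega>_eta by blast
qed

text \<open>Only meaningful on the relative interior, where \<open>\<omega>\<close> is differentiable; elsewhere the
  choice is unspecified.\<close>

definition D\<omega> :: "real ^ 'y \<Rightarrow> real ^ 'y \<Rightarrow> real" where
  "D\<omega> x = (SOME D. (\<omega> has_derivative D) (at x within affine hull prob_simplex))"

lemma has_derivative_D\<omega>:
  assumes "x \<in> relint_prob_simplex"
  shows "(\<omega> has_derivative D\<omega> x) (at x within affine hull prob_simplex)"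
  using \<omega>_differentiable[OF assms] unfolding D\<omega>_def differentiable_def by (rule someI_ex)

lemma has_derivative_D\<omega>_prob_simplex:
  assumes "x \<in> relint_prob_simplex"
  shows "(\<omega> has_derivative D\<omega> x) (at x within prob_simplex)"
  using has_derivative_D\<omega>[OF assms] hull_subset by (rule has_derivative_subset)

lemma linear_D\<omega>: "x \<in> relint_prob_simplex \<Longrightarrow> linear (D\<omega> x)"
  using has_derivative_D\<omega> by (rule has_derivative_linear)

lemma gnorm_D\<omega>_tendsto:
  assumes u: "\<And>k. u k \<in> relint_prob_simplex" and lim: "u \<longlonglongrightarrow> b"
    and b: "b \<in> prob_simplex - relint_prob_simplex"
  shows "filterlim (\<lambda>k. gnorm (affine hull prob_simplex) (D\<omega> (u k))) at_top sequentially"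
proof -
  have blowup: "\<forall>(u::nat \<Rightarrow> real ^ 'y) b Df.
      (\<forall>k. u k \<in> relint_prob_simplex \<and>
        (\<omega> has_derivative Df k) (at (u k) within affine hull prob_simplex))
      \<longrightarrow> u \<longlonglongrightarrow> b \<longrightarrow> b \<in> closure (edom \<Omega>) - relint_prob_simplex
      \<longrightarrow> filterlim (\<lambda>k. gnorm (affine hull prob_simplex) (Df k)) at_top sequentially"
    using legendre unfolding legendre_on_def Let_def relint_dom_\<Omega> \<omega>_eta by (elim conjE) assumption
  have "\<forall>k. u k \<in> relint_prob_simplex \<and>
      (\<omega> has_derivative D\<omega> (u k)) (at (u k) within affine hull prob_simplex)"
    using u has_derivative_D\<omega> by blast
  moreover have "b \<in> closure (edom \<Omega>) - relint_prob_simplex"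
    using b dom closure_subset by auto
  ultimately show ?thesis
    using blowup[rule_format, of u "\<lambda>k. D\<omega> (u k)" b] lim by blast
qed

lemma subgradient_at_relint:
  assumes a: "a \<in> relint_prob_simplex"
  obtains \<sigma> where "\<forall>z\<in>prob_simplex. \<omega> a + \<sigma> \<bullet> (z - a) \<le> \<omega> z"
proof
  show "\<forall>z\<in>prob_simplex. \<omega> a + adjoint (D\<omega> a) 1 \<bullet> (z - a) \<le> \<omega> z"
    using convex_on_derivative_le[OF convex_on_\<omega> has_derivative_D\<omega>_prob_simplex[OF a]]
      linear_eq_inner_adjoint[OF linear_D\<omega>[OF a]] a relint_prob_simplex_subset
    by force
qed

lemma D\<omega>_eq_subgradient:
  assumes a: "a \<in> relint_prob_simplex" and sub: "\<forall>z\<in>prob_simplex. \<omega> a + \<sigma> \<bullet> (z - a) \<le> \<omega> z"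
    and d: "(\<Sum>y\<in>UNIV. d $ y) = 0"
  shows "D\<omega> a d = \<sigma> \<bullet> d"
proof -
  obtain \<delta> where \<delta>: "\<delta> > 0" and line: "\<And>t. \<bar>t\<bar> \<le> \<delta> \<Longrightarrow> a + t *\<^sub>R d \<in> prob_simplex"
    using relint_prob_simplex_add_in_prob_simplex[OF a d] by blast
  have "a + \<delta> *\<^sub>R d \<in> prob_simplex" "a - \<delta> *\<^sub>R d \<in> prob_simplex"
    using line[of \<delta>] line[of "- \<delta>"] \<delta> by simp_all
  then show ?thesis
    using subgradient_eq_derivative[OF sub has_derivative_D\<omega>_prob_simplex[OF a] convex_prob_simplex]
      a relint_prob_simplex_subset \<delta> by blast
qed

lemma subgradient_le_D\<omega>_toward_barycenter:
  assumes b: "b \<in> prob_simplex" and sub: "\<forall>z\<in>prob_simplex. \<omega> b + v \<bullet> (z - b) \<le> \<omega> z"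
    and l: "0 < l" "l \<le> 1"
  shows "v \<bullet> (barycenter - b) \<le> D\<omega> (b + l *\<^sub>R (barycenter - b)) (barycenter - b)"
proof -
  define u where "u = b + l *\<^sub>R (barycenter - b)"
  have u: "u \<in> relint_prob_simplex" "u \<in> prob_simplex"
    using segment_to_barycenter_in_relint_prob_simplex[OF b l] relint_prob_simplex_subset
    by (auto simp: u_def)
  have bu: "b - u = (- l) *\<^sub>R (barycenter - b)"
    by (simp add: u_def)
  have "- l * D\<omega> u (barycenter - b) = D\<omega> u (b - u)"
    unfolding bu linear_scale[OF linear_D\<omega>[OF u(1)]] by simp
  also have "\<dots> \<le> \<omega> b - \<omega> u"
    by (rule convex_on_derivative_le[OF convex_on_\<omega> has_derivative_D\<omega>_prob_simplex[OF u(1)] u(2) b])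
  also have "\<dots> \<le> v \<bullet> (b - u)"
    using sub u(2) by (fastforce simp: inner_diff_right)
  also have "\<dots> = - l * (v \<bullet> (barycenter - b))"
    unfolding bu by simp
  finally show ?thesis
    using l by (simp add: u_def)
qed

lemma D\<omega>_bounded_toward_barycenter:
  assumes b: "b \<in> prob_simplex" and sub: "\<forall>z\<in>prob_simplex. \<omega> b + v \<bullet> (z - b) \<le> \<omega> z"
    and B: "\<And>x. x \<in> prob_simplex \<Longrightarrow> \<bar>\<omega> x\<bar> \<le> B"
    and l: "0 < l" "l \<le> 1" and w: "w \<in> dir (affine hull prob_simplex)" "norm w = 1"
  shows "D\<omega> (b + l *\<^sub>R (barycenter - b)) w \<le> real CARD('y) * (2 * B + \<bar>v \<bullet> (barycenter - b)\<bar>)"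
proof -
  define u where "u = b + l *\<^sub>R (barycenter - b)"
  define n where "n = real CARD('y)"
  have u: "u \<in> relint_prob_simplex" "u \<in> prob_simplex"
    using segment_to_barycenter_in_relint_prob_simplex[OF b l] relint_prob_simplex_subset
    by (auto simp: u_def)
  note lin = linear_D\<omega>[OF u(1)]
  define x where "x = barycenter + (1 / n) *\<^sub>R w"
  have x: "x \<in> prob_simplex"
    unfolding x_def n_def
    using sum_eq_0_of_dir_affine_hull_prob_simplex[OF w(1)] w(2)
    by (intro barycenter_add_in_prob_simplex) auto
  have "x - u = (1 - l) *\<^sub>R (barycenter - b) + (1 / n) *\<^sub>R w"
    by (simp add: x_def u_def algebra_simps)
  then have "(1 - l) * D\<omega> u (barycenter - b) + (1 / n) * D\<omega> u w = D\<omega> u (x - u)"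
    by (simp add: linear_add[OF lin] linear_scale[OF lin])
  also have "\<dots> \<le> \<omega> x - \<omega> u"
    by (rule convex_on_derivative_le[OF convex_on_\<omega> has_derivative_D\<omega>_prob_simplex[OF u(1)] u(2) x])
  also have "\<dots> \<le> 2 * B"
    using B[OF x] B[OF u(2)] by linarith
  finally have "(1 / n) * D\<omega> u w \<le> 2 * B - (1 - l) * D\<omega> u (barycenter - b)" by simp
  also have "\<dots> \<le> 2 * B - (1 - l) * (v \<bullet> (barycenter - b))"
    using subgradient_le_D\<omega>_toward_barycenter[OF b sub l] l by (simp add: u_def mult_left_mono)
  also have "\<dots> \<le> 2 * B + \<bar>v \<bullet> (barycenter - b)\<bar>"
  proof -
    have "(1 - l) * - (v \<bullet> (barycenter - b)) \<le> (1 - l) * \<bar>v \<bullet> (barycenter - b)\<bar>"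
      using l by (intro mult_left_mono) auto
    also have "\<dots> \<le> \<bar>v \<bullet> (barycenter - b)\<bar>"
      using l by (intro mult_left_le_one_le) auto
    finally show ?thesis by simp
  qed
  finally have "D\<omega> u w / n \<le> 2 * B + \<bar>v \<bullet> (barycenter - b)\<bar>"
    by simp
  then show ?thesis
    unfolding u_def[symmetric] n_def[symmetric] by (simp add: pos_divide_le_eq n_def mult.commute)
qed

lemma relint_prob_simplex_if_subgradient:
  assumes b: "b \<in> prob_simplex" and sub: "\<forall>z\<in>prob_simplex. \<omega> b + v \<bullet> (z - b) \<le> \<omega> z"
  shows "b \<in> relint_prob_simplex"
proof (rule ccontr)
  \<comment> \<open>Approaching \<open>b\<close> from the barycenter,
    the gradients of \<open>\<omega>\<close> stay bounded, against essential smoothness.\<close>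
  assume not_relint: "b \<notin> relint_prob_simplex"
  obtain B where B: "\<And>x. x \<in> prob_simplex \<Longrightarrow> \<bar>\<omega> x\<bar> \<le> B"
    using \<omega>_bounded by blast
  define K where "K = real CARD('y) * (2 * B + \<bar>v \<bullet> (barycenter - b)\<bar>)"
  define u where "u k = b + inverse (real (Suc k)) *\<^sub>R (barycenter - b)" for k
  have u: "u k \<in> relint_prob_simplex" for k
    unfolding u_def by (rule segment_to_barycenter_in_relint_prob_simplex[OF b])
      (auto simp: inverse_le_1_iff)
  have "u \<longlonglongrightarrow> b + 0 *\<^sub>R (barycenter - b)"
    unfolding u_def by (intro tendsto_intros LIMSEQ_inverse_real_of_nat)
  then have "filterlim (\<lambda>k. gnorm (affine hull prob_simplex) (D\<omega> (u k))) at_top sequentially"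
    using b not_relint by (intro gnorm_D\<omega>_tendsto[OF u]) auto
  then obtain N where N: "\<And>k. k \<ge> N \<Longrightarrow> K + 1 \<le> gnorm (affine hull prob_simplex) (D\<omega> (u k))"
    unfolding filterlim_at_top eventually_sequentially by meson
  obtain w0 :: "real ^ 'y" where w0: "w0 \<in> dir (affine hull prob_simplex)" "w0 \<noteq> 0"
    using dir_affine_hull_prob_simplex_nonzero[OF b not_relint] by blast
  have "gnorm (affine hull prob_simplex) (D\<omega> (u N)) \<le> K"
  proof (rule gnorm_le[OF affine_affine_hull linear_D\<omega>[OF u] w0])
    fix w :: "real ^ 'y" assume w: "w \<in> dir (affine hull prob_simplex)" "norm w = 1"
    show "D\<omega> (u N) w \<le> K"
      unfolding K_def u_def
      by (rule D\<omega>_bounded_toward_barycenter[OF b sub B _ _ w]) (auto simp: inverse_le_1_iff)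
  qed
  with N[OF order_refl] show False by linarith
qed

section \<open>The alternating minimization scheme\<close>

definition fy_gap :: "real ^ 'y \<Rightarrow> real ^ 'y \<Rightarrow> real" where
  "fy_gap s x = \<omega> x + \<omega>_conj s - s \<bullet> x"

lemma fy_gap_nonneg: "x \<in> prob_simplex \<Longrightarrow> 0 \<le> fy_gap s x"
  using fenchel_young[of x s] by (simp add: fy_gap_def)

lemma fy_gap_eq_0_iff_subgradient:
  "a \<in> prob_simplex \<Longrightarrow> fy_gap \<sigma> a = 0 \<longleftrightarrow> (\<forall>z\<in>prob_simplex. \<omega> a + \<sigma> \<bullet> (z - a) \<le> \<omega> z)"
  using \<omega>_conj_eq_iff_subgradient[of a \<sigma>] by (auto simp: fy_gap_def)

lemma fy_gap_three_point:
  assumes a: "a \<in> prob_simplex" and sub: "\<forall>z\<in>prob_simplex. \<omega> a + \<sigma>' \<bullet> (z - a) \<le> \<omega> z"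
  shows "fy_gap \<sigma>' x - fy_gap \<sigma> x \<le> (\<sigma> - \<sigma>') \<bullet> (x - a)"
proof -
  have "\<omega>_conj \<sigma>' = \<sigma>' \<bullet> a - \<omega> a"
    using \<omega>_conj_eq_iff_subgradient[OF a] sub by blast
  moreover have "\<sigma> \<bullet> a - \<omega> a \<le> \<omega>_conj \<sigma>"
    by (rule fenchel_young[OF a])
  ultimately show ?thesis
    by (simp add: fy_gap_def inner_diff_left inner_diff_right)
qed

lemma jensen_gap_\<Omega>: "jensen_gap \<Omega> N p = (1 / real N) * (\<Sum>i<N. \<omega> (p i)) - \<omega> (avg N p)"
  by (simp add: jensen_gap_def \<omega>_def avg_def)

definition objective :: "nat \<Rightarrow> real \<Rightarrow> (nat \<Rightarrow> real ^ 'y) \<Rightarrow> real ^ 'y \<Rightarrow> (nat \<Rightarrow> real ^ 'y) \<Rightarrow> real"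
  where "objective N \<kappa> g s p = (1 / real N) * (\<Sum>i<N. g i \<bullet> p i + \<kappa> * fy_gap s (p i))"

definition reduced_objective :: "nat \<Rightarrow> real \<Rightarrow> (nat \<Rightarrow> real ^ 'y) \<Rightarrow> (nat \<Rightarrow> real ^ 'y) \<Rightarrow> real"
  where "reduced_objective N \<kappa> g p = (1 / real N) * (\<Sum>i<N. g i \<bullet> p i) + \<kappa> * jensen_gap \<Omega> N p"

lemma S_N_eq_objective:
  assumes "\<forall>i<N. p i \<in> prob_simplex"
  shows "S_N \<Omega> \<kappa> N g (\<lambda>i. s) p = ereal (objective N \<kappa> g s p)"
proof -
  have "(\<Sum>i<N. S_single \<Omega> \<kappa> (g i) s (p i)) = (\<Sum>i<N. ereal (g i \<bullet> p i + \<kappa> * fy_gap s (p i)))"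
    using assms by (intro sum.cong)
      (simp_all add: S_single_def fy_loss_def fy_gap_def \<Omega>_eq fconj_\<Omega>_finite)
  then show ?thesis
    by (simp add: S_N_def objective_def)
qed

lemma objective_eq_reduced_objective:
  assumes "N \<ge> 1"
  shows "objective N \<kappa> g s p = reduced_objective N \<kappa> g p + \<kappa> * fy_gap s (avg N p)"
  using assms
  by (simp add: objective_def reduced_objective_def fy_gap_def jensen_gap_\<Omega> inner_avg_right
      sum.distrib sum_subtractf sum_distrib_left[symmetric] algebra_simps)

lemma objective_fun_upd:
  assumes "i < N"
  shows "objective N \<kappa> g s (p(i := x)) = objective N \<kappa> g s p
     + (1 / real N) * ((g i \<bullet> x + \<kappa> * fy_gap s x) - (g i \<bullet> p i + \<kappa> * fy_gap s (p i)))"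
proof -
  define h where "h j y = g j \<bullet> y + \<kappa> * fy_gap s y" for j y
  have "(\<Sum>j<N. h j ((p(i := x)) j)) = h i x + (\<Sum>j\<in>{..<N} - {i}. h j (p j))"
    using assms by (subst sum.remove[of _ i]) auto
  moreover have "(\<Sum>j<N. h j (p j)) = h i (p i) + (\<Sum>j\<in>{..<N} - {i}. h j (p j))"
    using assms by (subst sum.remove[of _ i]) auto
  ultimately show ?thesis
    by (simp add: objective_def h_def[symmetric] algebra_simps)
qed

lemma objective_argmin_distribution_subgradient:
  assumes \<kappa>: "\<kappa> > 0" and i: "i < N" and q: "\<forall>j<N. q j \<in> prob_simplex"
    and q_min: "\<forall>p. (\<forall>j<N. p j \<in> prob_simplex) \<longrightarrow> objective N \<kappa> g \<sigma> q \<le> objective N \<kappa> g \<sigma> p"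
  shows "\<forall>z\<in>prob_simplex. \<omega> (q i) + (\<sigma> - (1 / \<kappa>) *\<^sub>R g i) \<bullet> (z - q i) \<le> \<omega> z"
proof
  fix z :: "real ^ 'y" assume z: "z \<in> prob_simplex"
  have "objective N \<kappa> g \<sigma> q \<le> objective N \<kappa> g \<sigma> (q(i := z))"
    using q_min q z by simp
  then have "g i \<bullet> q i + \<kappa> * fy_gap \<sigma> (q i) \<le> g i \<bullet> z + \<kappa> * fy_gap \<sigma> z"
    using i by (simp add: objective_fun_upd zero_le_divide_iff)
  then have "\<kappa> * (\<omega> (q i) + (\<sigma> - (1 / \<kappa>) *\<^sub>R g i) \<bullet> (z - q i)) \<le> \<kappa> * \<omega> z"
    using \<kappa> by (simp add: fy_gap_def inner_diff_left inner_diff_right algebra_simps)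
  then show "\<omega> (q i) + (\<sigma> - (1 / \<kappa>) *\<^sub>R g i) \<bullet> (z - q i) \<le> \<omega> z"
    using \<kappa> by simp
qed

lemma objective_argmin_score_subgradient:
  assumes \<kappa>: "\<kappa> > 0" and N: "N \<ge> 1" and a: "avg N q \<in> relint_prob_simplex"
    and s_min: "\<forall>s. objective N \<kappa> g \<sigma> q \<le> objective N \<kappa> g s q"
  shows "\<forall>z\<in>prob_simplex. \<omega> (avg N q) + \<sigma> \<bullet> (z - avg N q) \<le> \<omega> z"
proof -
  have a': "avg N q \<in> prob_simplex"
    using a relint_prob_simplex_subset by blast
  obtain \<sigma>\<^sub>0 where "\<forall>z\<in>prob_simplex. \<omega> (avg N q) + \<sigma>\<^sub>0 \<bullet> (z - avg N q) \<le> \<omega> z"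
    using subgradient_at_relint[OF a] by blast
  then have "fy_gap \<sigma>\<^sub>0 (avg N q) = 0"
    using fy_gap_eq_0_iff_subgradient[OF a'] by blast
  moreover have "\<kappa> * fy_gap \<sigma> (avg N q) \<le> \<kappa> * fy_gap \<sigma>\<^sub>0 (avg N q)"
    using s_min[rule_format, of \<sigma>\<^sub>0] by (simp add: objective_eq_reduced_objective[OF N])
  ultimately have "fy_gap \<sigma> (avg N q) = 0"
    using \<kappa> fy_gap_nonneg[OF a', of \<sigma>] by (simp add: mult_le_0_iff)
  then show ?thesis
    using fy_gap_eq_0_iff_subgradient[OF a'] by blast
qed

definition jensen_gap_convex :: "nat \<Rightarrow> bool" where
  "jensen_gap_convex N \<longleftrightarrow> (\<forall>p p' t. (\<forall>i<N. p i \<in> prob_simplex) \<and> (\<forall>i<N. p' i \<in> prob_simplex)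
      \<and> 0 \<le> t \<and> t \<le> 1 \<longrightarrow> jensen_gap \<Omega> N (\<lambda>i. t *\<^sub>R p i + (1 - t) *\<^sub>R p' i)
        \<le> t * jensen_gap \<Omega> N p + (1 - t) * jensen_gap \<Omega> N p')"

lemma jensen_gap_convex_if_eq_on_prob_simplex:
  assumes N: "N \<ge> 1" and eq: "\<And>x. x \<in> prob_simplex \<Longrightarrow> \<Psi> x = \<Omega> x"
    and convex: "\<forall>p p' t. (\<forall>i<N. p i \<in> prob_simplex) \<and> (\<forall>i<N. p' i \<in> prob_simplex) \<and> 0 \<le> t \<and> t \<le> 1
      \<longrightarrow> jensen_gap \<Psi> N (\<lambda>i. t *\<^sub>R p i + (1 - t) *\<^sub>R p' i)
        \<le> t * jensen_gap \<Psi> N p + (1 - t) * jensen_gap \<Psi> N p'"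
  shows "jensen_gap_convex N"
  unfolding jensen_gap_convex_def
proof (intro allI impI)
  have jensen_gap_eq: "jensen_gap \<Psi> N p = jensen_gap \<Omega> N p" if p: "\<forall>i<N. p i \<in> prob_simplex" for p
  proof -
    have "avg N p \<in> prob_simplex"
      using avg_in_prob_simplex[OF N] p by blast
    then show ?thesis
      using p eq by (simp add: jensen_gap_def avg_def)
  qed
  fix p p' :: "nat \<Rightarrow> real ^ 'y" and t :: real
  assume h: "(\<forall>i<N. p i \<in> prob_simplex) \<and> (\<forall>i<N. p' i \<in> prob_simplex) \<and> 0 \<le> t \<and> t \<le> 1"
  then have "\<forall>i<N. t *\<^sub>R p i + (1 - t) *\<^sub>R p' i \<in> prob_simplex"
    by (auto intro: convexD[OF convex_prob_simplex])
  moreover have "jensen_gap \<Psi> N (\<lambda>i. t *\<^sub>R p i + (1 - t) *\<^sub>R p' i)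
      \<le> t * jensen_gap \<Psi> N p + (1 - t) * jensen_gap \<Psi> N p'"
    using convex h by blast
  ultimately show "jensen_gap \<Omega> N (\<lambda>i. t *\<^sub>R p i + (1 - t) *\<^sub>R p' i)
      \<le> t * jensen_gap \<Omega> N p + (1 - t) * jensen_gap \<Omega> N p'"
    using h by (simp add: jensen_gap_eq)
qed

lemma jensen_gap_derivative_le:
  assumes N: "N \<ge> 1" and J: "jensen_gap_convex N"
    and q: "\<forall>i<N. q i \<in> relint_prob_simplex" and p: "\<forall>i<N. p i \<in> prob_simplex"
  shows "(1 / real N) * (\<Sum>i<N. D\<omega> (q i) (p i - q i)) - D\<omega> (avg N q) (avg N p - avg N q)
      \<le> jensen_gap \<Omega> N p - jensen_gap \<Omega> N q"
proof -
  define a where "a = avg N q"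
  define x where "x = avg N p"
  have q': "\<forall>i<N. q i \<in> prob_simplex"
    using q relint_prob_simplex_subset by blast
  have a: "a \<in> relint_prob_simplex" "a \<in> prob_simplex" and x: "x \<in> prob_simplex"
    using avg_in_relint_prob_simplex[OF N] avg_in_prob_simplex[OF N] q q' p
      relint_prob_simplex_subset
    by (auto simp: a_def x_def)
  define \<phi> where "\<phi> t = jensen_gap \<Omega> N (\<lambda>i. q i + t *\<^sub>R (p i - q i))" for t
  have \<phi>: "\<phi> t = (1 / real N) * (\<Sum>i<N. \<omega> (q i + t *\<^sub>R (p i - q i))) - \<omega> (a + t *\<^sub>R (x - a))" for t
    by (simp add: \<phi>_def jensen_gap_\<Omega> avg_add_scaleR_diff a_def x_def)
  have "((\<lambda>t. (1 / real N) * (\<Sum>i<N. (\<omega> (q i + t *\<^sub>R (p i - q i)) - \<omega> (q i)) / t)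
      - (\<omega> (a + t *\<^sub>R (x - a)) - \<omega> a) / t)
      \<longlongrightarrow> (1 / real N) * (\<Sum>i<N. D\<omega> (q i) (p i - q i)) - D\<omega> a (x - a)) (at_right 0)"
  proof (intro tendsto_diff tendsto_mult_left tendsto_sum)
    fix i assume "i \<in> {..<N}"
    then show "((\<lambda>t. (\<omega> (q i + t *\<^sub>R (p i - q i)) - \<omega> (q i)) / t) \<longlongrightarrow> D\<omega> (q i) (p i - q i))
        (at_right 0)"
      using q q' p by (intro has_derivative_difference_quotient_at_right
          [OF has_derivative_D\<omega>_prob_simplex convex_prob_simplex]) auto
  qed (intro has_derivative_difference_quotient_at_right
      [OF has_derivative_D\<omega>_prob_simplex convex_prob_simplex] a x)
  moreover have "(1 / real N) * (\<Sum>i<N. (\<omega> (q i + t *\<^sub>R (p i - q i)) - \<omega> (q i)) / t)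
      - (\<omega> (a + t *\<^sub>R (x - a)) - \<omega> a) / t = (\<phi> t - \<phi> 0) / t" for t
    using N by (cases "t = 0")
      (simp_all add: \<phi> sum_subtractf sum_divide_distrib[symmetric] field_simps)
  ultimately have "((\<lambda>t. (\<phi> t - \<phi> 0) / t) \<longlongrightarrow>
      (1 / real N) * (\<Sum>i<N. D\<omega> (q i) (p i - q i)) - D\<omega> a (x - a)) (at_right 0)"
    by simp
  moreover have "\<phi> t \<le> (1 - t) * \<phi> 0 + t * \<phi> 1" if "0 < t" "t < 1" for t
  proof -
    have "(\<lambda>i. q i + t *\<^sub>R (p i - q i)) = (\<lambda>i. t *\<^sub>R p i + (1 - t) *\<^sub>R q i)"
      by (simp add: fun_eq_iff algebra_simps)
    then show ?thesis
      using J p q' that unfolding jensen_gap_convex_def \<phi>_def by (simp add: algebra_simps)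
  qed
  ultimately have "(1 / real N) * (\<Sum>i<N. D\<omega> (q i) (p i - q i)) - D\<omega> a (x - a) \<le> \<phi> 1 - \<phi> 0"
    by (rule difference_quotient_limit_le_secant)
  then show ?thesis
    by (simp add: \<phi>_def a_def x_def)
qed

lemma reduced_objective_descent:
  assumes \<kappa>: "\<kappa> > 0" and N: "N \<ge> 1" and J: "jensen_gap_convex N"
    and q: "\<forall>i<N. q i \<in> relint_prob_simplex" and p: "\<forall>i<N. p i \<in> prob_simplex"
    and sub_q: "\<forall>i<N. \<forall>z\<in>prob_simplex. \<omega> (q i) + (\<sigma> - (1 / \<kappa>) *\<^sub>R g i) \<bullet> (z - q i) \<le> \<omega> z"
    and sub_avg: "\<forall>z\<in>prob_simplex. \<omega> (avg N q) + \<sigma>' \<bullet> (z - avg N q) \<le> \<omega> z"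
  shows "\<kappa> * ((\<sigma> - \<sigma>') \<bullet> (avg N p - avg N q))
      \<le> reduced_objective N \<kappa> g p - reduced_objective N \<kappa> g q"
proof -
  define a where "a = avg N q"
  define x where "x = avg N p"
  define G where "G = (1 / real N) * (\<Sum>i<N. g i \<bullet> (p i - q i))"
  have q': "\<forall>i<N. q i \<in> prob_simplex"
    using q relint_prob_simplex_subset by blast
  have a: "a \<in> relint_prob_simplex" "a \<in> prob_simplex" and x: "x \<in> prob_simplex"
    using avg_in_relint_prob_simplex[OF N] avg_in_prob_simplex[OF N] q q' p
      relint_prob_simplex_subset
    by (auto simp: a_def x_def)
  have "\<sigma> \<bullet> (x - a) = (1 / real N) * (\<Sum>i<N. \<sigma> \<bullet> (p i - q i))"
    by (simp add: x_def a_def inner_avg_right inner_diff_right sum_subtractf right_diff_distrib)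
  then have "\<sigma> \<bullet> (x - a) - G / \<kappa>
      = (1 / real N) * (\<Sum>i<N. \<sigma> \<bullet> (p i - q i)) - (1 / real N) * (1 / \<kappa>) * (\<Sum>i<N. g i \<bullet> (p i - q i))"
    by (simp add: G_def)
  also have "\<dots> = (1 / real N) * (\<Sum>i<N. (\<sigma> - (1 / \<kappa>) *\<^sub>R g i) \<bullet> (p i - q i))"
    by (simp add: inner_diff_left sum_subtractf sum_distrib_left right_diff_distrib)
  also have "\<dots> \<le> (1 / real N) * (\<Sum>i<N. D\<omega> (q i) (p i - q i))"
    using sub_q q q' p
    by (intro mult_left_mono sum_mono
        subgradient_le_derivative[OF _ has_derivative_D\<omega>_prob_simplex convex_prob_simplex]) auto
  finally have first_order: "\<sigma> \<bullet> (x - a) - G / \<kappa> \<le> (1 / real N) * (\<Sum>i<N. D\<omega> (q i) (p i - q i))" .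
  have "D\<omega> a (x - a) = \<sigma>' \<bullet> (x - a)"
    using sub_avg x a by (intro D\<omega>_eq_subgradient) (auto simp: a_def sum_subtractf prob_simplex_def)
  then have "\<sigma> \<bullet> (x - a) - G / \<kappa> - \<sigma>' \<bullet> (x - a) \<le> jensen_gap \<Omega> N p - jensen_gap \<Omega> N q"
    using first_order jensen_gap_derivative_le[OF N J q p] unfolding a_def x_def by linarith
  then have "\<kappa> * ((\<sigma> - \<sigma>') \<bullet> (x - a)) - G \<le> \<kappa> * (jensen_gap \<Omega> N p - jensen_gap \<Omega> N q)"
    using \<kappa> by (simp add: inner_diff_left field_simps)
  then show ?thesis
    by (simp add: reduced_objective_def G_def x_def a_def inner_diff_right
      sum_subtractf algebra_simps)
qed

lemma alternating_minimization_step: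
  assumes \<kappa>: "\<kappa> > 0" and N: "N \<ge> 1" and J: "jensen_gap_convex N"
    and q: "\<forall>i<N. q i \<in> prob_simplex"
    and q_min: "\<forall>p. (\<forall>i<N. p i \<in> prob_simplex) \<longrightarrow> objective N \<kappa> g \<sigma> q \<le> objective N \<kappa> g \<sigma> p"
    and s_min: "\<forall>s. objective N \<kappa> g \<sigma>' q \<le> objective N \<kappa> g s q"
    and p: "\<forall>i<N. p i \<in> prob_simplex"
  shows "objective N \<kappa> g \<sigma>' q + \<kappa> * fy_gap \<sigma>' (avg N p)
      \<le> reduced_objective N \<kappa> g p + \<kappa> * fy_gap \<sigma> (avg N p)"
proof -
  have sub_q: "\<forall>i<N. \<forall>z\<in>prob_simplex. \<omega> (q i) + (\<sigma> - (1 / \<kappa>) *\<^sub>R g i) \<bullet> (z - q i) \<le> \<omega> z"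
    using objective_argmin_distribution_subgradient[OF \<kappa> _ q q_min] by blast
  then have q_relint: "\<forall>i<N. q i \<in> relint_prob_simplex"
    using q relint_prob_simplex_if_subgradient by blast
  then have a: "avg N q \<in> relint_prob_simplex" "avg N q \<in> prob_simplex"
    using avg_in_relint_prob_simplex[OF N] relint_prob_simplex_subset by auto
  have sub_avg: "\<forall>z\<in>prob_simplex. \<omega> (avg N q) + \<sigma>' \<bullet> (z - avg N q) \<le> \<omega> z"
    by (rule objective_argmin_score_subgradient[OF \<kappa> N a(1) s_min])
  have "objective N \<kappa> g \<sigma>' q = reduced_objective N \<kappa> g q"
    using fy_gap_eq_0_iff_subgradient[OF a(2)] sub_avg
      by (simp add: objective_eq_reduced_objective[OF N])
  moreover have "\<kappa> * (fy_gap \<sigma>' (avg N p) - fy_gap \<sigma> (avg N p))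
    \<le> \<kappa> * ((\<sigma> - \<sigma>') \<bullet> (avg N p - avg N q))"
    using fy_gap_three_point[OF a(2) sub_avg] \<kappa> by (intro mult_left_mono) auto
  moreover note reduced_objective_descent[OF \<kappa> N J q_relint p sub_q sub_avg]
  ultimately show ?thesis
    by (simp add: algebra_simps)
qed

lemma reduced_objective_le_objective:
  assumes "N \<ge> 1" "\<kappa> > 0" "\<forall>i<N. p i \<in> prob_simplex"
  shows "reduced_objective N \<kappa> g p \<le> objective N \<kappa> g s p"
  using assms fy_gap_nonneg[OF avg_in_prob_simplex, of N p s]
  by (simp add: objective_eq_reduced_objective)

lemma fy_gap_bounded:
  obtains C where "\<And>x. x \<in> prob_simplex \<Longrightarrow> fy_gap s x \<le> C"
proof -
  obtain B where B: "\<And>x. x \<in> prob_simplex \<Longrightarrow> \<bar>\<omega> x\<bar> \<le> B"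
    using \<omega>_bounded by blast
  have "fy_gap s x \<le> B + \<omega>_conj s + norm s" if x: "x \<in> prob_simplex" for x
  proof -
    have "- (s \<bullet> x) \<le> norm s"
      using Cauchy_Schwarz_ineq2[of s x] prob_simplex_norm_le_1[OF x]
        mult_left_le[of "norm x" "norm s"] by simp
    then show ?thesis
      using B[OF x] by (simp add: fy_gap_def)
  qed
  then show ?thesis
    using that by blast
qed

lemma alternating_minimization_objective_rate:
  assumes \<kappa>: "\<kappa> > 0" and N: "N \<ge> 1" and J: "jensen_gap_convex N"
    and q: "\<And>t. \<forall>i<N. q (Suc t) i \<in> prob_simplex"
    and q_min: "\<And>t. \<forall>p. (\<forall>i<N. p i \<in> prob_simplex) \<longrightarrow>
      objective N \<kappa> g (sbar t) (q (Suc t)) \<le> objective N \<kappa> g (sbar t) p"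
    and s_min: "\<And>t. \<forall>s. objective N \<kappa> g (sbar (Suc t)) (q (Suc t)) \<le> objective N \<kappa> g s (q (Suc t))"
  obtains C where "\<And>T s p. T \<ge> 1 \<Longrightarrow> \<forall>i<N. p i \<in> prob_simplex \<Longrightarrow>
    objective N \<kappa> g (sbar T) (q T) \<le> objective N \<kappa> g s p + C / real T"
proof -
  define V where "V t = objective N \<kappa> g (sbar t) (q t)" for t
  have decreasing: "V (Suc t) \<le> V t" if t_pos: "1 \<le> t" for t
  proof -
    obtain t' where t: "t = Suc t'"
      using t_pos by (cases t) auto
    have "V (Suc t) \<le> objective N \<kappa> g (sbar t) (q (Suc t))"
      unfolding V_def t using s_min by blast
    also have "\<dots> \<le> V t"
      unfolding V_def using q_min[of t] q[of t'] t by blast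
    finally show ?thesis .
  qed
  obtain C where C: "\<And>x. x \<in> prob_simplex \<Longrightarrow> fy_gap (sbar 0) x \<le> C"
    using fy_gap_bounded by blast
  have "V T \<le> objective N \<kappa> g s p + \<kappa> * C / real T"
    if T: "T \<ge> 1" and p: "\<forall>i<N. p i \<in> prob_simplex" for T s p
  proof -
    have x: "avg N p \<in> prob_simplex"
      using avg_in_prob_simplex[OF N] p by blast
    have "V T \<le> reduced_objective N \<kappa> g p + \<kappa> * fy_gap (sbar 0) (avg N p) / real T"
    proof (rule decreasing_telescoping_rate[where V = V and
      R = "\<lambda>t. \<kappa> * fy_gap (sbar t) (avg N p)"])
      show "V (Suc t) + \<kappa> * fy_gap (sbar (Suc t)) (avg N p)
          \<le> reduced_objective N \<kappa> g p + \<kappa> * fy_gap (sbar t) (avg N p)" for t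
        unfolding V_def by (rule alternating_minimization_step[OF \<kappa> N J q q_min s_min p])
    qed (use decreasing \<kappa> fy_gap_nonneg[OF x] T in auto)
    also have "\<dots> \<le> reduced_objective N \<kappa> g p + \<kappa> * C / real T"
      using C[OF x] \<kappa> T by (simp add: divide_right_mono)
    also have "\<dots> \<le> objective N \<kappa> g s p + \<kappa> * C / real T"
      using reduced_objective_le_objective[OF N \<kappa> p] by simp
    finally show ?thesis .
  qed
  then show ?thesis
    using that[of "\<kappa> * C"] unfolding V_def by blast
qed

lemma alternating_minimization_rate:
  assumes \<kappa>: "\<kappa> > 0" and N: "N \<ge> 1" and J: "jensen_gap_convex N"
    and q_step: "\<forall>t. (\<forall>i<N. q (Suc t) i \<in> prob_simplex) \<and>
         (\<forall>p. (\<forall>i<N. p i \<in> prob_simplex) \<longrightarrow>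
            S_N \<Omega> \<kappa> N g (\<lambda>i. sbar t) (q (Suc t)) \<le> S_N \<Omega> \<kappa> N g (\<lambda>i. sbar t) p)"
    and s_step: "\<forall>t. \<forall>s. S_N \<Omega> \<kappa> N g (\<lambda>i. sbar (Suc t)) (q (Suc t))
         \<le> S_N \<Omega> \<kappa> N g (\<lambda>i. s) (q (Suc t))"
  shows "\<exists>C::real. \<forall>\<^sub>F t in sequentially.
           S_N \<Omega> \<kappa> N g (\<lambda>i. sbar t) (q t)
           - (INF sp \<in> {(s, p). (\<forall>i<N. p i \<in> prob_simplex)}. S_N \<Omega> \<kappa> N g (\<lambda>i. fst sp) (snd sp))
           \<le> ereal (C / real t)"
proof -
  have q: "\<forall>i<N. q (Suc t) i \<in> prob_simplex" for t
    using q_step by blast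
  obtain C where C: "\<And>T s p. T \<ge> 1 \<Longrightarrow> \<forall>i<N. p i \<in> prob_simplex \<Longrightarrow>
      objective N \<kappa> g (sbar T) (q T) \<le> objective N \<kappa> g s p + C / real T"
  proof (rule alternating_minimization_objective_rate[where q = q and sbar = sbar, OF \<kappa> N J q])
    show "\<forall>p. (\<forall>i<N. p i \<in> prob_simplex) \<longrightarrow>
        objective N \<kappa> g (sbar t) (q (Suc t)) \<le> objective N \<kappa> g (sbar t) p" for t
      using q_step q by (simp add: S_N_eq_objective)
    show "\<forall>s. objective N \<kappa> g (sbar (Suc t)) (q (Suc t)) \<le> objective N \<kappa> g s (q (Suc t))" for t
      using s_step q by (simp add: S_N_eq_objective)
  qed blast
  show ?thesis
  proof (intro exI[of _ C] eventually_sequentiallyI[of 1])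
    fix T :: nat assume T: "1 \<le> T"
    then obtain T' where T': "T = Suc T'"
      by (cases T) auto
    have current: "S_N \<Omega> \<kappa> N g (\<lambda>i. sbar T) (q T) = ereal (objective N \<kappa> g (sbar T) (q T))"
      unfolding T' using q by (rule S_N_eq_objective)
    have lower: "ereal (objective N \<kappa> g (sbar T) (q T) - C / real T) \<le> S_N \<Omega> \<kappa> N g (\<lambda>i. s) p"
      if "\<forall>i<N. p i \<in> prob_simplex" for s p
      using C[OF T that, of s] that by (simp add: S_N_eq_objective)
    show "S_N \<Omega> \<kappa> N g (\<lambda>i. sbar T) (q T)
        - (INF sp \<in> {(s, p). \<forall>i<N. p i \<in> prob_simplex}. S_N \<Omega> \<kappa> N g (\<lambda>i. fst sp) (snd sp))
        \<le> ereal (C / real T)"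
      unfolding current by (rule ereal_minus_INF_le) (auto intro: lower)
  qed
qed

end

theorem theorem1:
  fixes emb :: "'y::finite \<Rightarrow> real ^ 'd::finite"
    and \<kappa> :: real and N :: nat
    and \<xi> :: "nat \<Rightarrow> 'xi" and c :: "real ^ 'd \<Rightarrow> 'xi \<Rightarrow> real"
    and \<Omega> \<Psi> :: "real ^ 'y \<Rightarrow> ereal"
    and sbar :: "nat \<Rightarrow> real ^ 'y" and q :: "nat \<Rightarrow> nat \<Rightarrow> real ^ 'y"
  assumes inj: "inj emb"
    and extreme: "\<forall>y. emb y \<notin> convex hull (emb ` (UNIV - {y}))"
    and kappa: "\<kappa> > 0"
    and N: "N \<ge> 1"
    and Omega_proper: "proper_fun \<Omega>" and Omega_lsc: "lsc_fun \<Omega>" and Omega_convex: "econvex \<Omega>"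
    and Omega_dom: "edom \<Omega> = prob_simplex"
    and Omega_legendre_H: "legendre_on (affine hull prob_simplex) \<Omega>"
    and Omega_split: "\<forall>x. \<Omega> x = (if x \<in> prob_simplex then \<Psi> x else \<infinity>)"
    and Psi_legendre: "legendre_on UNIV \<Psi>"
    and jensen_convex: "\<forall>p p' t. (\<forall>i<N. p i \<in> prob_simplex) \<and> (\<forall>i<N. p' i \<in> prob_simplex) \<and> 0 \<le> t \<and> t \<le> 1
         \<longrightarrow> jensen_gap \<Psi> N (\<lambda>i. t *\<^sub>R p i + (1 - t) *\<^sub>R p' i)
              \<le> t * jensen_gap \<Psi> N p + (1 - t) * jensen_gap \<Psi> N p'"
    and q_step: "\<forall>t. (\<forall>i<N. q (Suc t) i \<in> prob_simplex) \<and>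
         (\<forall>p. (\<forall>i<N. p i \<in> prob_simplex) \<longrightarrow>
            S_N \<Omega> \<kappa> N (\<lambda>i. gam c emb (\<xi> i)) (\<lambda>i. sbar t) (q (Suc t))
              \<le> S_N \<Omega> \<kappa> N (\<lambda>i. gam c emb (\<xi> i)) (\<lambda>i. sbar t) p)"
    and s_step: "\<forall>t. \<forall>s. S_N \<Omega> \<kappa> N (\<lambda>i. gam c emb (\<xi> i)) (\<lambda>i. sbar (Suc t)) (q (Suc t))
              \<le> S_N \<Omega> \<kappa> N (\<lambda>i. gam c emb (\<xi> i)) (\<lambda>i. s) (q (Suc t))"
  shows "\<exists>C::real. \<forall>\<^sub>F t in sequentially.
           S_N \<Omega> \<kappa> N (\<lambda>i. gam c emb (\<xi> i)) (\<lambda>i. sbar t) (q t)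
           - (INF sp \<in> {(s, p). (\<forall>i<N. p i \<in> prob_simplex)}.
                S_N \<Omega> \<kappa> N (\<lambda>i. gam c emb (\<xi> i)) (\<lambda>i. fst sp) (snd sp))
           \<le> ereal (C / real t)"
proof -
  interpret simplex_regularizer \<Omega>
    using Omega_proper Omega_dom Omega_convex Omega_legendre_H by unfold_locales
  have "jensen_gap_convex N"
    using Omega_split jensen_convex by (intro jensen_gap_convex_if_eq_on_prob_simplex[OF N]) auto
  then show ?thesis
    by (rule alternating_minimization_rate[OF kappa N _ q_step s_step])
qed

end
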